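(* Let $u$ be the exact solution of $\dot u=f(u,t)$, $t\in(0,T]$, $u(0)=u_0$, and let $U$ be a piecewise polynomial approximation of $u$ ($U_i|_{I_{ij}}$ a polynomial for each $i,j$, with the convention $U_i(0^-)=u_i(0)$), right-continuous at $T$, with $e=U-u$ and $e(T)\ne0$. Let $\varphi$ solve the dual problem $-\dot\varphi=J^*(u,U,\cdot)\varphi$ on $[0,T)$ with $\varphi(T)=e(T)/\|e(T)\|$ (i.e. $g=0$). Then $$\|e(T)\|=\sum_{i=1}^N\sum_{j=1}^{M_i}\Big[\int_{I_{ij}}R_i(U,\cdot)\varphi_i\,dt+[U_i]_{i,j-1}\varphi_i(t_{i,j-1})\Big],$$ where $R_i(U,t)=\dot U_i(t)-f_i(U(t),t)$ on $(t_{i,j-1},t_{ij})$.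
   Context: $f:\mathbb{R}^N\times(0,T]\to\mathbb{R}^N$ is bounded, Lipschitz and continuously differentiable in $u$; $\|\cdot\|$ is the Euclidean norm. For each component $i$ there is a partition $0=t_{i0}<\dots<t_{iM_i}=T$ with $I_{ij}=(t_{i,j-1},t_{ij}]$; jumps are $[U_i]_{ij}=U_i(t_{ij}^+)-U_i(t_{ij}^-)$. $J^*(v_1,v_2,t)=\big(\int_0^1\frac{\partial f}{\partial u}(s v_1+(1-s)v_2,t)\,ds\big)^{*}$ with $^*$ the transpose. *)

theory Defs
  imports "HOL-Analysis.Analysis" "HOL-Computational_Algebra.Polynomial"
begin

text \<open>Transpose of the averaged Jacobian: J^*(v1,v2,t) = (int_0^1 Df(s v1 + (1-s) v2, t) ds)^T,
  where Df v t is the Jacobian matrix of f(.,t) at v.\<close>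
definition Jstar :: "(real^'n \<Rightarrow> real \<Rightarrow> real^'n^'n) \<Rightarrow> real^'n \<Rightarrow> real^'n \<Rightarrow> real \<Rightarrow> real^'n^'n" where
  "Jstar Df v1 v2 t = transpose (integral {0..1} (\<lambda>s. Df (s *\<^sub>R v1 + (1 - s) *\<^sub>R v2) t))"

definition jump :: "(real \<Rightarrow> real^'n) \<Rightarrow> real^'n \<Rightarrow> 'n \<Rightarrow> nat \<Rightarrow> real \<Rightarrow> real" where
  "jump U u0 i k a =
     Lim (at_right a) (\<lambda>s. U s $ i) -
     (if k = 0 then u0 $ i else Lim (at_left a) (\<lambda>s. U s $ i))"

definition residual :: "(real^'n \<Rightarrow> real \<Rightarrow> real^'n) \<Rightarrow> (real \<Rightarrow> real^'n) \<Rightarrow> 'n \<Rightarrow> real \<Rightarrow> real" where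
  "residual f U i t = deriv (\<lambda>s. U s $ i) t - f (U t) t $ i"

end

theory Submission
  imports Defs
begin

(*
  Fix a component i. Away from the nodes, the product (U_i - u_i) phi_i has derivative
  (U_i' - f_i(u)) phi_i - (U_i - u_i) (J^* phi)_i, where U_i' is the derivative of the polynomial
  piece. Integrating piece by piece, the boundary terms telescope up to the jumps of U_i at the
  nodes (the first one taken against u_i(0)), leaving e_i(T) phi_i(T); summing over i gives
  e(T) . phi(T) = |e(T)|. By the mean value identity J(u,U) (U - u) = f(U) - f(u), the sum over i
  of these integrands equals the sum of the R_i phi_i, so the two families of piecewise integrals
  have the same total.
*)

locale interval_partition =
  fixes \<tau> :: "nat \<Rightarrow> real" and m :: nat
  assumes increasing: "\<And>j. j < m \<Longrightarrow> \<tau> j < \<tau> (Suc j)"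
begin

lemma node_less:
  assumes "j < k" "k \<le> m"
  shows "\<tau> j < \<tau> k"
  using assms
proof (induction k)
  case (Suc k)
  then show ?case
    using increasing[of k] by (cases "j = k") auto
qed simp

lemma node_le: "j \<le> k \<Longrightarrow> k \<le> m \<Longrightarrow> \<tau> j \<le> \<tau> k"
  using node_less[of j k] by (cases "j = k") auto

lemma piece_subset: "j \<in> {1..m} \<Longrightarrow> {\<tau> (j - 1)..\<tau> j} \<subseteq> {\<tau> 0..\<tau> m}"
  using node_le[of 0 "j - 1"] node_le[of j m] by auto

lemma locate_piece:
  assumes "\<tau> 0 < t" "t \<le> \<tau> m"
  obtains j where "j \<in> {1..m}" "\<tau> (j - 1) < t" "t \<le> \<tau> j"
proof -
  define j where "j = (LEAST j. t \<le> \<tau> j)"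
  have tj: "t \<le> \<tau> j"
    unfolding j_def by (rule LeastI[of _ m]) (use assms in auto)
  have jm: "j \<le> m"
    unfolding j_def by (rule Least_le) (use assms in auto)
  have j0: "j \<noteq> 0"
    using tj assms by (metis not_le)
  have "\<not> t \<le> \<tau> (j - 1)"
    unfolding j_def by (rule not_less_Least) (use j0 j_def in auto)
  then show ?thesis
    using that[of j] tj jm j0 by auto
qed

lemma has_integral_pieces:
  fixes g :: "real \<Rightarrow> 'a::banach"
  assumes "\<And>j. j \<in> {1..m} \<Longrightarrow> g integrable_on {\<tau> (j - 1)..\<tau> j}"
  shows "(g has_integral (\<Sum>j = 1..m. integral {\<tau> (j - 1)..\<tau> j} g)) {\<tau> 0..\<tau> m}"
proof -
  have "(g has_integral (\<Sum>j = 1..n. integral {\<tau> (j - 1)..\<tau> j} g)) {\<tau> 0..\<tau> n}" if "n \<le> m" for n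
    using that
  proof (induction n)
    case (Suc n)
    have "(g has_integral integral {\<tau> n..\<tau> (Suc n)} g) {\<tau> n..\<tau> (Suc n)}"
      using assms[of "Suc n"] Suc.prems by auto
    from has_integral_combine[OF _ _ Suc.IH[OF Suc_leD[OF Suc.prems]] this] show ?case
      using node_le[of 0 n] node_le[of n "Suc n"] Suc.prems by simp
  qed (simp add: has_integral_refl)
  then show ?thesis
    by simp
qed

end

locale piecewise_polynomial = interval_partition +
  fixes w :: "real \<Rightarrow> real"
  assumes polynomial_on_pieces:
    "\<And>j. j \<in> {1..m} \<Longrightarrow> \<exists>p. \<forall>s\<in>{\<tau> (j - 1)<..\<tau> j}. w s = poly p s"
begin

definition piece :: "nat \<Rightarrow> real poly" where
  "piece j = (SOME p. \<forall>s\<in>{\<tau> (j - 1)<..\<tau> j}. w s = poly p s)"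

lemma eq_piece: "j \<in> {1..m} \<Longrightarrow> s \<in> {\<tau> (j - 1)<..\<tau> j} \<Longrightarrow> w s = poly (piece j) s"
  using someI_ex[OF polynomial_on_pieces] unfolding piece_def by blast

lemma has_real_derivative_piece:
  assumes "j \<in> {1..m}" "t \<in> {\<tau> (j - 1)<..<\<tau> j}"
  shows "(w has_real_derivative poly (pderiv (piece j)) t) (at t)"
  by (rule has_field_derivative_transform_within_open[OF poly_DERIV _ assms(2)])
     (use eq_piece[OF assms(1)] in auto)

lemma tendsto_at_right_node:
  assumes "k < m"
  shows "(w \<longlongrightarrow> poly (piece (Suc k)) (\<tau> k)) (at_right (\<tau> k))"
proof -
  have "\<forall>\<^sub>F s in at_right (\<tau> k). poly (piece (Suc k)) s = w s"
    unfolding eventually_at_right_field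
    using eq_piece[of "Suc k"] node_less[of k "Suc k"] assms by (intro exI[of _ "\<tau> (Suc k)"]) auto
  moreover have "((\<lambda>s. poly (piece (Suc k)) s) \<longlongrightarrow> poly (piece (Suc k)) (\<tau> k)) (at_right (\<tau> k))"
    by (intro tendsto_intros)
  ultimately show ?thesis
    by (rule tendsto_cong[THEN iffD1])
qed

lemma tendsto_at_left_node:
  assumes "k \<in> {1..m}"
  shows "(w \<longlongrightarrow> poly (piece k) (\<tau> k)) (at_left (\<tau> k))"
proof -
  have "\<forall>\<^sub>F s in at_left (\<tau> k). poly (piece k) s = w s"
    unfolding eventually_at_left_field
    using eq_piece[of k] node_less[of "k - 1" k] assms by (intro exI[of _ "\<tau> (k - 1)"]) auto
  moreover have "((\<lambda>s. poly (piece k) s) \<longlongrightarrow> poly (piece k) (\<tau> k)) (at_left (\<tau> k))"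
    by (intro tendsto_intros)
  ultimately show ?thesis
    by (rule tendsto_cong[THEN iffD1])
qed

lemma integrable_deriv_mult:
  assumes "j \<in> {1..m}" "continuous_on {\<tau> (j - 1)..\<tau> j} \<psi>"
  shows "(\<lambda>t. deriv w t * \<psi> t) integrable_on {\<tau> (j - 1)..\<tau> j}"
proof -
  have integrable: "(\<lambda>t. poly (pderiv (piece j)) t * \<psi> t) integrable_on {\<tau> (j - 1)..\<tau> j}"
    by (intro integrable_continuous_real continuous_on_mult continuous_on_poly continuous_on_id assms(2))
  have eq: "deriv w t * \<psi> t = poly (pderiv (piece j)) t * \<psi> t"
    if "t \<in> {\<tau> (j - 1)..\<tau> j} - {\<tau> (j - 1), \<tau> j}" for t
  proof -
    have "t \<in> {\<tau> (j - 1)<..<\<tau> j}"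
      using that by auto
    then show ?thesis
      using DERIV_imp_deriv[OF has_real_derivative_piece[OF assms(1)]] by simp
  qed
  show ?thesis
    by (rule integrable_spike_finite[of "{\<tau> (j - 1), \<tau> j}", OF _ eq integrable]) simp_all
qed

lemma has_integral_piece:
  assumes j: "j \<in> {1..m}" and "finite S"
    and v_cont: "continuous_on {\<tau> 0..\<tau> m} v" and \<psi>_cont: "continuous_on {\<tau> 0..\<tau> m} \<psi>"
    and v_deriv: "\<And>t. t \<in> {\<tau> 0<..<\<tau> m} - S \<Longrightarrow> (v has_real_derivative v' t) (at t)"
    and \<psi>_deriv: "\<And>t. t \<in> {\<tau> 0<..<\<tau> m} - S \<Longrightarrow> (\<psi> has_real_derivative \<psi>' t) (at t)"
  shows "((\<lambda>t. (deriv w t - v' t) * \<psi> t + (w t - v t) * \<psi>' t) has_integral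
      (poly (piece j) (\<tau> j) - v (\<tau> j)) * \<psi> (\<tau> j)
      - (poly (piece j) (\<tau> (j - 1)) - v (\<tau> (j - 1))) * \<psi> (\<tau> (j - 1))) {\<tau> (j - 1)..\<tau> j}"
proof (rule fundamental_theorem_of_calculus_interior_strong[OF \<open>finite S\<close>])
  show "\<tau> (j - 1) \<le> \<tau> j"
    using node_le j by auto
  show "continuous_on {\<tau> (j - 1)..\<tau> j} (\<lambda>s. (poly (piece j) s - v s) * \<psi> s)"
    using piece_subset[OF j]
    by (intro continuous_intros continuous_on_subset[OF v_cont] continuous_on_subset[OF \<psi>_cont])
  fix t assume t: "t \<in> {\<tau> (j - 1)<..<\<tau> j} - S"
  then have "t \<in> {\<tau> 0<..<\<tau> m} - S"
    using piece_subset[OF j] by force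
  moreover have "w t = poly (piece j) t" "deriv w t = poly (pderiv (piece j)) t"
    using t eq_piece[OF j] DERIV_imp_deriv[OF has_real_derivative_piece[OF j]] by auto
  ultimately show "((\<lambda>s. (poly (piece j) s - v s) * \<psi> s) has_vector_derivative
      (deriv w t - v' t) * \<psi> t + (w t - v t) * \<psi>' t) (at t)"
    unfolding has_real_derivative_iff_has_vector_derivative[symmetric]
    by (auto intro!: derivative_eq_intros v_deriv \<psi>_deriv)
qed

lemma integration_by_parts:
  assumes "m \<noteq> 0" "finite S"
    and "continuous_on {\<tau> 0..\<tau> m} v" "continuous_on {\<tau> 0..\<tau> m} \<psi>"
    and "\<And>t. t \<in> {\<tau> 0<..<\<tau> m} - S \<Longrightarrow> (v has_real_derivative v' t) (at t)"
    and "\<And>t. t \<in> {\<tau> 0<..<\<tau> m} - S \<Longrightarrow> (\<psi> has_real_derivative \<psi>' t) (at t)"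
  shows "(\<Sum>j = 1..m.
      integral {\<tau> (j - 1)..\<tau> j} (\<lambda>t. (deriv w t - v' t) * \<psi> t + (w t - v t) * \<psi>' t)
      + (Lim (at_right (\<tau> (j - 1))) w
         - (if j - 1 = 0 then v (\<tau> 0) else Lim (at_left (\<tau> (j - 1))) w)) * \<psi> (\<tau> (j - 1)))
    = (w (\<tau> m) - v (\<tau> m)) * \<psi> (\<tau> m)" (is "(\<Sum>j = 1..m. ?summand j) = _")
proof -
  \<comment> \<open>\<open>E 0 = 0\<close>: in the first jump \<open>v (\<tau> 0)\<close> plays the role of the value before \<open>\<tau> 0\<close>.\<close>
  define E where "E j = (if j = 0 then 0 else (poly (piece j) (\<tau> j) - v (\<tau> j)) * \<psi> (\<tau> j))" for j
  have "?summand j = E j - E (j - 1)" if j: "j \<in> {1..m}" for j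
  proof -
    have "Lim (at_right (\<tau> (j - 1))) w = poly (piece j) (\<tau> (j - 1))"
      using tendsto_Lim[OF _ tendsto_at_right_node[of "j - 1"]] j by auto
    moreover have "Lim (at_left (\<tau> (j - 1))) w = poly (piece (j - 1)) (\<tau> (j - 1))" if "j - 1 \<noteq> 0"
    proof -
      have "j - 1 \<in> {1..m}"
        using j that by auto
      then show ?thesis
        using tendsto_Lim[OF _ tendsto_at_left_node] by simp
    qed
    ultimately show ?thesis
      using integral_unique[OF has_integral_piece[OF j assms(2-6)]] j
      by (auto simp: E_def algebra_simps)
  qed
  then have "(\<Sum>j = 1..m. ?summand j) = (\<Sum>j = 1..m. E j - E (j - 1))"
    by (rule sum.cong[OF refl])
  also have "\<dots> = E m - E 0"
    by (simp add: sum.atLeast1_atMost_eq sum_lessThan_telescope)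
  also have "\<dots> = (w (\<tau> m) - v (\<tau> m)) * \<psi> (\<tau> m)"
    using eq_piece[of m "\<tau> m"] node_less[of "m - 1" m] \<open>m \<noteq> 0\<close> by (simp add: E_def)
  finally show ?thesis .
qed

end

lemma has_integral_sum_pieces:
  fixes g :: "'i \<Rightarrow> real \<Rightarrow> real"
  assumes "finite I" "\<And>i. interval_partition (\<tau> i) (m i)" "\<And>i. \<tau> i 0 = a" "\<And>i. \<tau> i (m i) = b"
    and "\<And>i j. i \<in> I \<Longrightarrow> j \<in> {1..m i} \<Longrightarrow> g i integrable_on {\<tau> i (j - 1)..\<tau> i j}"
  shows "((\<lambda>t. \<Sum>i\<in>I. g i t) has_integral
      (\<Sum>i\<in>I. \<Sum>j = 1..m i. integral {\<tau> i (j - 1)..\<tau> i j} (g i))) {a..b}"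
proof (rule has_integral_sum[OF assms(1)])
  fix i assume "i \<in> I"
  then have "(g i has_integral (\<Sum>j = 1..m i. integral {\<tau> i (j - 1)..\<tau> i j} (g i)))
      {\<tau> i 0..\<tau> i (m i)}"
    by (intro interval_partition.has_integral_pieces[OF assms(2)] assms(5))
  then show "(g i has_integral (\<Sum>j = 1..m i. integral {\<tau> i (j - 1)..\<tau> i j} (g i))) {a..b}"
    by (simp only: assms(3,4))
qed

lemma sum_integrals_pieces_cong:
  fixes g h :: "'i \<Rightarrow> real \<Rightarrow> real"
  assumes "finite I" "\<And>i. interval_partition (\<tau> i) (m i)" "\<And>i. \<tau> i 0 = a" "\<And>i. \<tau> i (m i) = b"
    and "\<And>i j. i \<in> I \<Longrightarrow> j \<in> {1..m i} \<Longrightarrow> g i integrable_on {\<tau> i (j - 1)..\<tau> i j}"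
    and "\<And>i j. i \<in> I \<Longrightarrow> j \<in> {1..m i} \<Longrightarrow> h i integrable_on {\<tau> i (j - 1)..\<tau> i j}"
    and "\<And>t. t \<in> {a<..b} \<Longrightarrow> (\<Sum>i\<in>I. g i t) = (\<Sum>i\<in>I. h i t)"
  shows "(\<Sum>i\<in>I. \<Sum>j = 1..m i. integral {\<tau> i (j - 1)..\<tau> i j} (g i))
    = (\<Sum>i\<in>I. \<Sum>j = 1..m i. integral {\<tau> i (j - 1)..\<tau> i j} (h i))"
proof -
  have "((\<lambda>t. \<Sum>i\<in>I. h i t) has_integral
      (\<Sum>i\<in>I. \<Sum>j = 1..m i. integral {\<tau> i (j - 1)..\<tau> i j} (g i))) {a..b}"
  proof (rule has_integral_spike[OF _ _ has_integral_sum_pieces[OF assms(1-5)]])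
    show "negligible {a}"
      by simp
    show "(\<Sum>i\<in>I. h i t) = (\<Sum>i\<in>I. g i t)" if "t \<in> {a..b} - {a}" for t
      using assms(7)[of t] that by auto
  qed
  from has_integral_unique[OF this has_integral_sum_pieces[OF assms(1-4,6)]] show ?thesis .
qed

lemma averaged_jacobian_mult:
  fixes f :: "real^'n \<Rightarrow> real^'n" and Df :: "real^'n \<Rightarrow> real^'n^'n"
  assumes f_deriv: "\<And>v. (f has_derivative (\<lambda>h. Df v *v h)) (at v)"
    and Df_cont: "continuous_on UNIV Df"
  shows "integral {0..1} (\<lambda>s. Df (s *\<^sub>R a + (1 - s) *\<^sub>R b)) *v (a - b) = f a - f b"
proof -
  have "continuous_on {0..1} (\<lambda>s. Df (s *\<^sub>R a + (1 - s) *\<^sub>R b))"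
    by (rule continuous_on_compose2[OF Df_cont]) (auto intro!: continuous_intros)
  then have integrable: "(\<lambda>s. Df (s *\<^sub>R a + (1 - s) *\<^sub>R b)) integrable_on {0..1}"
    by (rule integrable_continuous_real)
  have "bounded_linear (\<lambda>A::real^'n^'n. A *v (a - b))"
    by (auto intro!: linearI simp: linear_conv_bounded_linear[symmetric]
        matrix_vector_mult_add_rdistrib scaleR_matrix_vector_assoc)
  from integral_linear[OF integrable this, symmetric]
  have "integral {0..1} (\<lambda>s. Df (s *\<^sub>R a + (1 - s) *\<^sub>R b)) *v (a - b)
      = integral {0..1} (\<lambda>s. Df (s *\<^sub>R a + (1 - s) *\<^sub>R b) *v (a - b))"
    by (simp add: o_def)
  also have "\<dots> = f (1 *\<^sub>R a + (1 - 1) *\<^sub>R b) - f (0 *\<^sub>R a + (1 - 0) *\<^sub>R b)"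
  proof (rule integral_unique, rule fundamental_theorem_of_calculus)
    fix s :: real
    have "((\<lambda>s. s *\<^sub>R a + (1 - s) *\<^sub>R b) has_derivative (\<lambda>h. h *\<^sub>R (a - b))) (at s within {0..1})"
      by (auto intro!: derivative_eq_intros simp: algebra_simps)
    from has_derivative_compose[OF this f_deriv]
    show "((\<lambda>s. f (s *\<^sub>R a + (1 - s) *\<^sub>R b)) has_vector_derivative
        Df (s *\<^sub>R a + (1 - s) *\<^sub>R b) *v (a - b)) (at s within {0..1})"
      unfolding has_vector_derivative_def by (simp add: matrix_vector_mult_scaleR)
  qed simp
  finally show ?thesis
    by simp
qed

lemma inner_Jstar:
  assumes "\<And>v. ((\<lambda>x. f x t) has_derivative (\<lambda>h. Df v t *v h)) (at v)"
    and "continuous_on UNIV (\<lambda>v. Df v t)"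
  shows "(v2 - v1) \<bullet> (Jstar Df v1 v2 t *v p) = (f v2 t - f v1 t) \<bullet> p"
proof -
  define A where "A = integral {0..1} (\<lambda>s. Df (s *\<^sub>R v1 + (1 - s) *\<^sub>R v2) t)"
  have "(v2 - v1) \<bullet> (transpose A *v p) = (A *v (v2 - v1)) \<bullet> p"
    by (metis dot_lmul_matrix vector_transpose_matrix)
  moreover have "A *v (v2 - v1) = f v2 t - f v1 t"
  proof -
    have "A *v (v1 - v2) = f v1 t - f v2 t"
      unfolding A_def using assms by (rule averaged_jacobian_mult)
    then show ?thesis
      by (metis matrix_vector_mult_diff_distrib minus_diff_eq)
  qed
  ultimately show ?thesis
    unfolding Jstar_def A_def by simp
qed

lemma integrable_bounded_continuous_off_finite:
  fixes g :: "real \<Rightarrow> real"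
  assumes "finite S" "\<And>t. t \<in> {a<..<b} - S \<Longrightarrow> isCont g t" "\<And>t. t \<in> {a<..<b} \<Longrightarrow> \<bar>g t\<bar> \<le> B"
  shows "g integrable_on {a..b}"
proof -
  define A where "A = {a<..<b} - S"
  have A_open: "open A"
    unfolding A_def using assms(1) by (intro open_Diff finite_imp_closed) auto
  have "g \<in> borel_measurable (lebesgue_on A)"
    by (rule continuous_imp_measurable_on_sets_lebesgue)
       (use A_open assms(2) in \<open>auto intro: continuous_at_imp_continuous_on borel_open simp: A_def\<close>)
  moreover have negligible: "negligible (({a..b} - A) \<union> (A - {a..b}))"
    by (rule negligible_subset[of "insert a (insert b S)"]) (use assms(1) in \<open>auto simp: A_def\<close>)
  then have "(\<lambda>_. B) integrable_on A"
    using integrable_spike_set_eq integrable_const_ivl by blast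
  ultimately have "g integrable_on A"
    by (rule measurable_bounded_by_integrable_imp_integrable)
       (use A_open assms(3) in \<open>auto intro: borel_open simp: A_def\<close>)
  then show ?thesis
    using integrable_spike_set_eq[OF negligible] by blast
qed

lemma finite_nodes:
  fixes tp :: "'i::finite \<Rightarrow> nat \<Rightarrow> real"
  shows "finite {tp i j | i j. j \<le> M i}"
  by (rule finite_subset[of _ "\<Union>i. tp i ` {..M i}"]) auto

lemma isCont_piecewise_polynomial_components:
  fixes U :: "real \<Rightarrow> real^'n"
  assumes pp: "\<And>i. piecewise_polynomial (tp i) (M i) (\<lambda>s. U s $ i)"
    and "\<And>i. tp i 0 = a" "\<And>i. tp i (M i) = b"
    and t: "t \<in> {a<..<b}" "\<And>i j. j \<le> M i \<Longrightarrow> t \<noteq> tp i j"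
  shows "isCont U t"
proof -
  have "isCont (\<lambda>s. U s $ i) t" for i
  proof -
    interpret piecewise_polynomial "tp i" "M i" "\<lambda>s. U s $ i"
      by (rule pp)
    obtain j where j: "j \<in> {1..M i}" "tp i (j - 1) < t" "t \<le> tp i j"
      using locate_piece[of t] t(1) assms(2,3) by auto
    then have "t \<in> {tp i (j - 1)<..<tp i j}"
      using t(2)[where i = i and j = j] by auto
    from DERIV_isCont[OF has_real_derivative_piece[OF j(1) this]] show ?thesis .
  qed
  then have "((\<lambda>s. \<chi> i. U s $ i) \<longlongrightarrow> (\<chi> i. U t $ i)) (at t)"
    by (intro tendsto_vec_lambda) (simp add: isCont_def)
  then show ?thesis
    by (simp add: isCont_def)
qed

lemma integrable_residual_mult:
  fixes f :: "real^'n \<Rightarrow> real \<Rightarrow> real^'n" and U \<phi> :: "real \<Rightarrow> real^'n"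
  assumes pp: "\<And>i. piecewise_polynomial (tp i) (M i) (\<lambda>s. U s $ i)"
    and tp_ends: "\<And>i. tp i 0 = 0" "\<And>i. tp i (M i) = T"
    and f_bounded: "\<exists>B. \<forall>v. \<forall>t\<in>{0<..T}. norm (f v t) \<le> B"
    and f_cont: "continuous_on (UNIV \<times> {0<..<T}) (\<lambda>(v, t). f v t)"
    and \<phi>_cont: "continuous_on {0..T} \<phi>"
    and j: "j \<in> {1..M i}"
  shows "(\<lambda>t. residual f U i t * \<phi> t $ i) integrable_on {tp i (j - 1)..tp i j}"
proof -
  interpret piecewise_polynomial "tp i" "M i" "\<lambda>s. U s $ i"
    by (rule pp)
  have piece_sub: "{tp i (j - 1)..tp i j} \<subseteq> {0..T}"
    using piece_subset[OF j] tp_ends by simp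
  obtain B where B: "\<And>v t. t \<in> {0<..T} \<Longrightarrow> norm (f v t) \<le> B"
    using f_bounded by blast
  obtain \<Phi> where \<Phi>: "\<And>s. s \<in> {0..T} \<Longrightarrow> norm (\<phi> s) \<le> \<Phi>"
    using compact_imp_bounded[OF compact_continuous_image[OF \<phi>_cont compact_Icc]]
    unfolding bounded_iff by blast
  have "isCont (\<lambda>t. f (U t) t $ i * \<phi> t $ i) t" if t: "t \<in> {0<..<T} - {tp k l | k l. l \<le> M k}" for t
  proof -
    have "isCont U t"
      using isCont_piecewise_polynomial_components[OF pp tp_ends] t by blast
    then have "isCont (\<lambda>s. (U s, s)) t"
      by (intro continuous_intros)
    moreover have "isCont (\<lambda>(v, t). f v t) (U t, t)"
      using f_cont t by (subst (asm) continuous_on_eq_continuous_at) (auto intro: open_Times)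
    ultimately have "isCont (\<lambda>s. f (U s) s) t"
      using isCont_o2[where f = "\<lambda>s. (U s, s)" and g = "\<lambda>(v, t). f v t"] by simp
    moreover have "isCont \<phi> t"
      using continuous_on_interior[OF \<phi>_cont] t by simp
    ultimately show ?thesis
      by (intro continuous_intros)
  qed
  moreover have "\<bar>f (U t) t $ i * \<phi> t $ i\<bar> \<le> B * \<Phi>" if "t \<in> {0<..<T}" for t
    using B[of t "U t"] \<Phi>[of t] that component_le_norm_cart[of "f (U t) t" i]
      component_le_norm_cart[of "\<phi> t" i]
    by (auto simp: abs_mult intro!: mult_mono)
  ultimately have "(\<lambda>t. f (U t) t $ i * \<phi> t $ i) integrable_on {tp i (j - 1)..tp i j}"
    using integrable_on_subinterval[OF integrable_bounded_continuous_off_finite[OF finite_nodes] piece_sub]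
    by blast
  moreover have "(\<lambda>t. deriv (\<lambda>s. U s $ i) t * \<phi> t $ i) integrable_on {tp i (j - 1)..tp i j}"
    using piece_sub by (intro integrable_deriv_mult[OF j] continuous_intros continuous_on_subset[OF \<phi>_cont])
  ultimately show ?thesis
    unfolding residual_def left_diff_distrib by (rule integrable_diff[rotated])
qed

lemma integration_by_parts_component:
  fixes U u \<phi> u' \<phi>' :: "real \<Rightarrow> real^'n"
  assumes pp: "piecewise_polynomial (tp i) (M i) (\<lambda>s. U s $ i)"
    and tp_ends: "tp i 0 = 0" "tp i (M i) = T" and "0 < T" and "finite S"
    and u_cont: "continuous_on {0..T} u" and \<phi>_cont: "continuous_on {0..T} \<phi>"
    and u_deriv: "\<And>t. t \<in> {0<..<T} - S \<Longrightarrow> (u has_vector_derivative u' t) (at t)"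
    and \<phi>_deriv: "\<And>t. t \<in> {0<..<T} - S \<Longrightarrow> (\<phi> has_vector_derivative \<phi>' t) (at t)"
  defines "D \<equiv> \<lambda>t. (deriv (\<lambda>s. U s $ i) t - u' t $ i) * \<phi> t $ i + (U t $ i - u t $ i) * \<phi>' t $ i"
  shows "\<And>j. j \<in> {1..M i} \<Longrightarrow> D integrable_on {tp i (j - 1)..tp i j}"
    and "(\<Sum>j = 1..M i. integral {tp i (j - 1)..tp i j} D
        + jump U (u 0) i (j - 1) (tp i (j - 1)) * \<phi> (tp i (j - 1)) $ i)
      = (U T $ i - u T $ i) * \<phi> T $ i"
proof -
  interpret piecewise_polynomial "tp i" "M i" "\<lambda>s. U s $ i"
    by (rule pp)
  have cont: "continuous_on {tp i 0..tp i (M i)} (\<lambda>s. u s $ i)"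
    "continuous_on {tp i 0..tp i (M i)} (\<lambda>s. \<phi> s $ i)"
    using u_cont \<phi>_cont unfolding tp_ends by (auto intro: continuous_intros)
  have "((\<lambda>s. u s $ i) has_real_derivative u' t $ i) (at t)"
    "((\<lambda>s. \<phi> s $ i) has_real_derivative \<phi>' t $ i) (at t)"
    if "t \<in> {tp i 0<..<tp i (M i)} - S" for t
    using bounded_linear.has_vector_derivative[OF bounded_linear_vec_nth u_deriv]
      bounded_linear.has_vector_derivative[OF bounded_linear_vec_nth \<phi>_deriv] that
    unfolding tp_ends by (auto simp: has_real_derivative_iff_has_vector_derivative)
  note hyps = \<open>finite S\<close> cont this
  show "D integrable_on {tp i (j - 1)..tp i j}" if "j \<in> {1..M i}" for j
    using has_integral_piece[OF that hyps] unfolding D_def by blast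
  have "M i \<noteq> 0"
    using tp_ends \<open>0 < T\<close> by (metis less_irrefl)
  from integration_by_parts[OF this hyps, unfolded tp_ends]
  show "(\<Sum>j = 1..M i. integral {tp i (j - 1)..tp i j} D
        + jump U (u 0) i (j - 1) (tp i (j - 1)) * \<phi> (tp i (j - 1)) $ i)
      = (U T $ i - u T $ i) * \<phi> T $ i"
    unfolding D_def jump_def by simp
qed

lemma sum_dual_integrand_eq_residual:
  assumes "\<And>v. ((\<lambda>x. f x t) has_derivative (\<lambda>h. Df v t *v h)) (at v)"
    and "continuous_on UNIV (\<lambda>v. Df v t)"
  shows "(\<Sum>i\<in>UNIV. (deriv (\<lambda>s. U s $ i) t - f (u t) t $ i) * \<phi> t $ i
      + (U t $ i - u t $ i) * (- (Jstar Df (u t) (U t) t *v \<phi> t)) $ i)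
    = (\<Sum>i\<in>UNIV. residual f U i t * \<phi> t $ i)"
proof -
  have "(U t - u t) \<bullet> (Jstar Df (u t) (U t) t *v \<phi> t) = (f (U t) t - f (u t) t) \<bullet> \<phi> t"
    by (rule inner_Jstar[where f = f and Df = Df, OF assms])
  then show ?thesis
    unfolding residual_def inner_vec_def
    by (simp add: sum.distrib sum_subtractf algebra_simps)
qed

theorem corollary6p2:
  fixes f :: "real^'n \<Rightarrow> real \<Rightarrow> real^'n"
    and Df :: "real^'n \<Rightarrow> real \<Rightarrow> real^'n^'n"
    and T :: real and u0 :: "real^'n"
    and u U \<phi> :: "real \<Rightarrow> real^'n"
    and M :: "'n \<Rightarrow> nat" and tp :: "'n \<Rightarrow> nat \<Rightarrow> real"
  assumes T_pos: "0 < T"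
    and f_bounded: "\<exists>B. \<forall>v. \<forall>t\<in>{0<..T}. norm (f v t) \<le> B"
    and f_lipschitz: "\<exists>L. L-lipschitz_on (UNIV \<times> {0<..T}) (\<lambda>(v, t). f v t)"
    and f_deriv: "\<And>v t. t \<in> {0<..T} \<Longrightarrow> ((\<lambda>x. f x t) has_derivative (\<lambda>h. Df v t *v h)) (at v)"
    and Df_cont: "\<And>t. t \<in> {0<..T} \<Longrightarrow> continuous_on UNIV (\<lambda>v. Df v t)"
    and u_cont: "continuous_on {0..T} u"
    and u_init: "u 0 = u0"
    and u_ode: "\<And>t. t \<in> {0<..T} \<Longrightarrow> (u has_vector_derivative f (u t) t) (at t within {0..T})"
    and part_start: "\<And>i. tp i 0 = 0"
    and part_end: "\<And>i. tp i (M i) = T"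
    and part_mono: "\<And>i j. j < M i \<Longrightarrow> tp i j < tp i (Suc j)"
    and U_poly: "\<And>i j. j \<in> {1..M i} \<Longrightarrow>
        \<exists>p :: real poly. \<forall>s\<in>{tp i (j - 1)<..tp i j}. U s $ i = poly p s"
    and eT_nz: "U T - u T \<noteq> 0"
    and phi_cont: "continuous_on {0..T} \<phi>"
    and phi_final: "\<phi> T = (1 / norm (U T - u T)) *\<^sub>R (U T - u T)"
    and phi_ode: "\<And>t. t \<in> {0<..<T} - {tp i j | i j. j \<le> M i} \<Longrightarrow>
        (\<phi> has_vector_derivative - (Jstar Df (u t) (U t) t *v \<phi> t)) (at t)"
  shows "norm (U T - u T) =
    (\<Sum>i\<in>UNIV. \<Sum>j = 1..M i.
       integral {tp i (j - 1)..tp i j} (\<lambda>t. residual f U i t * \<phi> t $ i)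
       + jump U u0 i (j - 1) (tp i (j - 1)) * \<phi> (tp i (j - 1)) $ i)"
proof -
  have partition: "interval_partition (tp i) (M i)" for i
    by (rule interval_partition.intro) (rule part_mono)
  have pp: "piecewise_polynomial (tp i) (M i) (\<lambda>s. U s $ i)" for i
    by (intro piecewise_polynomial.intro partition piecewise_polynomial_axioms.intro U_poly)
  have u_deriv: "(u has_vector_derivative f (u t) t) (at t)"
    if "t \<in> {0<..<T} - {tp i j | i j. j \<le> M i}" for t
    using u_ode[of t] at_within_interior[of t "{0..T}"] that by simp
  define D where "D i = (\<lambda>t. (deriv (\<lambda>s. U s $ i) t - f (u t) t $ i) * \<phi> t $ i
    + (U t $ i - u t $ i) * (- (Jstar Df (u t) (U t) t *v \<phi> t)) $ i)" for i
  note by_parts = integration_by_parts_component[where tp = tp and M = M and U = U,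
      OF pp part_start part_end T_pos finite_nodes[where tp = tp and M = M]
      u_cont phi_cont u_deriv phi_ode, folded D_def, unfolded u_init]
  obtain L where "L-lipschitz_on (UNIV \<times> {0<..T}) (\<lambda>(v, t). f v t)"
    using f_lipschitz by blast
  then have f_cont: "continuous_on (UNIV \<times> {0<..<T}) (\<lambda>(v, t). f v t)"
    by (rule continuous_on_subset[OF lipschitz_on_continuous_on]) auto
  have integrals: "(\<Sum>i\<in>UNIV. \<Sum>j = 1..M i. integral {tp i (j - 1)..tp i j} (D i))
      = (\<Sum>i\<in>UNIV. \<Sum>j = 1..M i. integral {tp i (j - 1)..tp i j} (\<lambda>t. residual f U i t * \<phi> t $ i))"
    using integrable_residual_mult[OF pp part_start part_end f_bounded f_cont phi_cont] by_parts(1)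
      sum_dual_integrand_eq_residual[where f = f and Df = Df, OF f_deriv Df_cont]
    by (intro sum_integrals_pieces_cong[OF _ partition part_start part_end]) (auto simp: D_def)
  have "norm (U T - u T) = (U T - u T) \<bullet> \<phi> T"
    using eT_nz unfolding phi_final by (simp add: power2_norm_eq_inner[symmetric] power2_eq_square)
  also have "\<dots> = (\<Sum>i\<in>UNIV. (U T $ i - u T $ i) * \<phi> T $ i)"
    by (simp add: inner_vec_def)
  also have "\<dots> = (\<Sum>i\<in>UNIV. \<Sum>j = 1..M i. integral {tp i (j - 1)..tp i j} (D i))
      + (\<Sum>i\<in>UNIV. \<Sum>j = 1..M i. jump U u0 i (j - 1) (tp i (j - 1)) * \<phi> (tp i (j - 1)) $ i)"
    by (simp only: by_parts(2)[symmetric] sum.distrib)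
  finally show ?thesis
    by (simp only: integrals sum.distrib)
qed

end
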